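(* Let $G$ be a finite simple graph and let $\tau,\tau'$ be two threshold assignments for the vertices of $G$ with $\overline{\tau}=\overline{\tau'}$. Let $r$ be an integer with $dyn_{\tau}(G)\leq r\leq dyn_{\tau'}(G)$. Then there exists a threshold assignment $\tau''$ with $\overline{\tau''}=\overline{\tau}$ such that $dyn_{\tau''}(G)=r$.
   Context: A threshold assignment is a function $\tau:V(G)\to\{0,1,2,\dots\}$; its average is $\overline{\tau}=\sum_{v\in V(G)}\tau(v)/|V(G)|$. A set $D\subseteq V(G)$ is a $\tau$-dynamic monopoly ($\tau$-dynamo) if for some $k\ge 0$ the vertex set can be partitioned into $D_0=D, D_1,\dots,D_k$ where for each $1\le i\le k$, $D_i$ consists of all vertices (outside $D_0\cup\dots\cup D_{i-1}$) having at least $\tau(v)$ neighbors in $D_0\cup\dots\cup D_{i-1}$. $dyn_\tau(G)$ denotes the minimum size of a $\tau$-dynamo of $G$. *)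

theory Defs
  imports Complex_Main
begin

definition simple_graph :: "'a set \<Rightarrow> ('a \<Rightarrow> 'a \<Rightarrow> bool) \<Rightarrow> bool" where
  "simple_graph V E \<longleftrightarrow> finite V \<and> (\<forall>u v. E u v \<longrightarrow> u \<in> V \<and> v \<in> V)
     \<and> (\<forall>u v. E u v \<longrightarrow> E v u) \<and> (\<forall>v. \<not> E v v)"

definition avg_threshold :: "'a set \<Rightarrow> ('a \<Rightarrow> nat) \<Rightarrow> real" where
  "avg_threshold V \<tau> = real (\<Sum>v\<in>V. \<tau> v) / real (card V)"

definition is_dynamo :: "'a set \<Rightarrow> ('a \<Rightarrow> 'a \<Rightarrow> bool) \<Rightarrow> ('a \<Rightarrow> nat) \<Rightarrow> 'a set \<Rightarrow> bool" where
  "is_dynamo V E \<tau> D \<longleftrightarrow> D \<subseteq> V \<and>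
     (\<exists>(k::nat) (Ds::nat \<Rightarrow> 'a set). Ds 0 = D \<and>
        (\<forall>i. 1 \<le> i \<and> i \<le> k \<longrightarrow>
            Ds i = {v \<in> V - (\<Union>j<i. Ds j). card {u \<in> (\<Union>j<i. Ds j). E v u} \<ge> \<tau> v}) \<and>
        (\<Union>i\<le>k. Ds i) = V)"

definition dyn :: "'a set \<Rightarrow> ('a \<Rightarrow> 'a \<Rightarrow> bool) \<Rightarrow> ('a \<Rightarrow> nat) \<Rightarrow> nat" where
  "dyn V E \<tau> = Min {card D | D. is_dynamo V E \<tau> D}"

end

theory Submission
  imports Defs
begin

text \<open>Move one unit of threshold from a vertex where \<open>\<tau>\<close> exceeds \<open>\<tau>'\<close> to one where it falls
short. This keeps the sum, and hence the average, and lowers the excess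
\<open>\<Sum>v\<in>V. \<tau> v - \<tau>' v\<close> by one. Raising a single threshold increases \<open>dyn\<close> by at most one
(add that vertex to an optimal dynamo) and lowering thresholds never increases it, so
along such a walk from \<open>\<tau>\<close> to \<open>\<tau>'\<close> the value of \<open>dyn\<close> climbs in steps of at most one
and therefore hits every integer between \<open>dyn \<tau>\<close> and \<open>dyn \<tau>'\<close>.\<close>

text \<open>\<open>activated V E t D i\<close> is the union \<open>D\<^sub>0 \<union> \<dots> \<union> D\<^sub>i\<close> of the first rounds of the
partition in the definition of a dynamo.\<close>

fun activated :: "'a set \<Rightarrow> ('a \<Rightarrow> 'a \<Rightarrow> bool) \<Rightarrow> ('a \<Rightarrow> nat) \<Rightarrow> 'a set \<Rightarrow> nat \<Rightarrow> 'a set" where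
  "activated V E t D 0 = D"
| "activated V E t D (Suc i) = activated V E t D i \<union>
     {v \<in> V - activated V E t D i. t v \<le> card {u \<in> activated V E t D i. E v u}}"

lemma activated_subset: "D \<subseteq> V \<Longrightarrow> activated V E t D k \<subseteq> V"
  by (induction k) auto

lemma seed_subset_activated: "D \<subseteq> activated V E t D k"
  by (induction k) auto

lemma is_dynamoD:
  assumes "is_dynamo V E t D"
  shows "D \<subseteq> V" and "\<exists>k. activated V E t D k = V"
proof -
  show "D \<subseteq> V" using assms unfolding is_dynamo_def by blast
  obtain k and Ds :: "nat \<Rightarrow> 'a set" where D0: "Ds 0 = D"
    and Ds: "\<forall>i. 1 \<le> i \<and> i \<le> k \<longrightarrow>
       Ds i = {v \<in> V - (\<Union>j<i. Ds j). card {u \<in> (\<Union>j<i. Ds j). E v u} \<ge> t v}"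
    and covers: "(\<Union>i\<le>k. Ds i) = V"
    using assms unfolding is_dynamo_def by blast
  have "(\<Union>j\<le>i. Ds j) = activated V E t D i" if "i \<le> k" for i
    using that
  proof (induction i)
    case 0
    then show ?case using D0 by simp
  next
    case (Suc i)
    have "(\<Union>j\<le>Suc i. Ds j) = (\<Union>j\<le>i. Ds j) \<union> Ds (Suc i)"
      by (simp add: atMost_Suc Un_commute)
    then show ?case
      using Suc Ds[rule_format, of "Suc i"] by (simp add: lessThan_Suc_atMost)
  qed
  then show "\<exists>k. activated V E t D k = V" using covers by blast
qed

lemma is_dynamoI:
  assumes "D \<subseteq> V" and "activated V E t D k = V"
  shows "is_dynamo V E t D"
proof -
  define Ds where "Ds i = (if i = 0 then D
      else {v \<in> V - activated V E t D (i - 1). t v \<le> card {u \<in> activated V E t D (i - 1). E v u}})"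
    for i
  have union: "(\<Union>j\<le>i. Ds j) = activated V E t D i" for i
    by (induction i) (auto simp: Ds_def atMost_Suc)
  have steps: "\<forall>i. 1 \<le> i \<and> i \<le> k \<longrightarrow>
      Ds i = {v \<in> V - (\<Union>j<i. Ds j). card {u \<in> (\<Union>j<i. Ds j). E v u} \<ge> t v}"
  proof (intro allI impI)
    fix i :: nat assume "1 \<le> i \<and> i \<le> k"
    then obtain m where m: "i = Suc m" by (cases i) auto
    show "Ds i = {v \<in> V - (\<Union>j<i. Ds j). card {u \<in> (\<Union>j<i. Ds j). E v u} \<ge> t v}"
      unfolding m lessThan_Suc_atMost union by (simp add: Ds_def)
  qed
  have "Ds 0 = D" by (simp add: Ds_def)
  moreover have "(\<Union>i\<le>k. Ds i) = V" using union[of k] assms(2) by simp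
  ultimately show ?thesis
    unfolding is_dynamo_def by (intro conjI exI[of _ k] exI[of _ Ds] assms(1) steps)
qed

lemma activated_mono:
  assumes "finite V" and "D \<subseteq> D'" and "D' \<subseteq> V"
    and le: "\<And>v. v \<in> V - D' \<Longrightarrow> t' v \<le> t v"
  shows "activated V E t D k \<subseteq> activated V E t' D' k"
proof (induction k)
  case 0
  then show ?case using \<open>D \<subseteq> D'\<close> by simp
next
  case (Suc k)
  show ?case
  proof
    fix v assume v: "v \<in> activated V E t D (Suc k)"
    show "v \<in> activated V E t' D' (Suc k)"
    proof (cases "v \<in> activated V E t D k \<or> v \<in> activated V E t' D' k")
      case True
      then show ?thesis using Suc by auto
    next
      case False
      then have "v \<in> V" and "t v \<le> card {u \<in> activated V E t D k. E v u}"
        and new: "v \<notin> activated V E t' D' k" using v by auto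
      have "{u \<in> activated V E t' D' k. E v u} \<subseteq> V"
        using activated_subset[OF \<open>D' \<subseteq> V\<close>, of E t' k] by blast
      then have "finite {u \<in> activated V E t' D' k. E v u}"
        using \<open>finite V\<close> by (rule finite_subset)
      then have "card {u \<in> activated V E t D k. E v u} \<le> card {u \<in> activated V E t' D' k. E v u}"
        using Suc by (intro card_mono) auto
      moreover have "t' v \<le> t v"
        using new seed_subset_activated[of D' V E t' k] \<open>v \<in> V\<close> by (intro le) blast
      ultimately show ?thesis using \<open>v \<in> V\<close> \<open>t v \<le> _\<close> new by simp
    qed
  qed
qed

lemma is_dynamo_mono:
  assumes "finite V" and "is_dynamo V E t D" and "D \<subseteq> D'" and "D' \<subseteq> V"
    and "\<And>v. v \<in> V - D' \<Longrightarrow> t' v \<le> t v"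
  shows "is_dynamo V E t' D'"
proof -
  obtain k where "activated V E t D k = V" using is_dynamoD(2)[OF assms(2)] by blast
  moreover have "activated V E t D k \<subseteq> activated V E t' D' k"
    using assms by (intro activated_mono) auto
  ultimately have "activated V E t' D' k = V"
    using activated_subset[OF assms(4)] by blast
  then show ?thesis using is_dynamoI[OF assms(4)] by blast
qed

lemma dyn_attained:
  assumes "finite V"
  shows "\<exists>D. is_dynamo V E t D \<and> card D = dyn V E t"
    and "is_dynamo V E t D \<Longrightarrow> dyn V E t \<le> card D"
proof -
  let ?sizes = "{card D | D. is_dynamo V E t D}"
  have "card D \<le> card V" if "is_dynamo V E t D" for D
    using card_mono[OF assms is_dynamoD(1)[OF that]] .
  then have "?sizes \<subseteq> {..card V}" by auto
  then have fin: "finite ?sizes" by (rule finite_subset) simp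
  have "card V \<in> ?sizes" using is_dynamoI[of V V E t 0] by auto
  then have "Min ?sizes \<in> ?sizes" using fin by (intro Min_in) auto
  then show "\<exists>D. is_dynamo V E t D \<and> card D = dyn V E t" unfolding dyn_def by auto
  assume "is_dynamo V E t D"
  then have "card D \<in> ?sizes" by blast
  then show "dyn V E t \<le> card D" unfolding dyn_def by (rule Min_le[OF fin])
qed

lemma dyn_le_Suc_if_le_off_vertex:
  assumes "finite V" and "w \<in> V" and "\<And>v. v \<in> V - {w} \<Longrightarrow> t' v \<le> t v"
  shows "dyn V E t' \<le> dyn V E t + 1"
proof -
  obtain D where D: "is_dynamo V E t D" "card D = dyn V E t"
    using dyn_attained(1)[OF assms(1)] by blast
  have "D \<subseteq> V" using is_dynamoD(1)[OF D(1)] .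
  then have "is_dynamo V E t' (insert w D)"
    using assms(2,3) by (intro is_dynamo_mono[OF assms(1) D(1)]) auto
  then have "dyn V E t' \<le> card (insert w D)" by (rule dyn_attained(2)[OF assms(1)])
  also have "\<dots> \<le> card D + 1"
    using finite_subset[OF \<open>D \<subseteq> V\<close> assms(1)] by (simp add: card_insert_if)
  finally show ?thesis using D(2) by simp
qed

lemma dyn_mono:
  assumes "finite V" and "\<And>v. v \<in> V \<Longrightarrow> t' v \<le> t v"
  shows "dyn V E t' \<le> dyn V E t"
proof -
  obtain D where D: "is_dynamo V E t D" "card D = dyn V E t"
    using dyn_attained(1)[OF assms(1)] by blast
  have "is_dynamo V E t' D"
    using is_dynamoD(1)[OF D(1)] assms(2) by (intro is_dynamo_mono[OF assms(1) D(1)]) auto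
  then have "dyn V E t' \<le> card D" by (rule dyn_attained(2)[OF assms(1)])
  with D(2) show ?thesis by simp
qed

lemma dyn_cong:
  assumes "finite V" and "\<And>v. v \<in> V \<Longrightarrow> t' v = t v"
  shows "dyn V E t' = dyn V E t"
  using assms by (intro order_antisym dyn_mono) auto

lemma exists_greater_if_sum_eq:
  fixes t t' :: "'a \<Rightarrow> nat"
  assumes "finite V" and "(\<Sum>v\<in>V. t v) = (\<Sum>v\<in>V. t' v)" and "\<exists>v\<in>V. t v \<noteq> t' v"
  shows "\<exists>u\<in>V. t' u < t u"
proof (rule ccontr)
  assume "\<not> (\<exists>u\<in>V. t' u < t u)"
  then have "\<forall>v\<in>V. t v \<le> t' v" by auto
  moreover obtain v where "v \<in> V" "t v < t' v"
    using assms(3) calculation by force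
  ultimately have "(\<Sum>v\<in>V. t v) < (\<Sum>v\<in>V. t' v)"
    using sum_strict_mono_ex1[OF assms(1)] by blast
  then show False using assms(2) by simp
qed

lemma unit_transfer:
  fixes t t' :: "'a \<Rightarrow> nat"
  assumes "finite V" and sum_eq: "(\<Sum>v\<in>V. t v) = (\<Sum>v\<in>V. t' v)" and "\<exists>v\<in>V. t v \<noteq> t' v"
  obtains w t1 where "w \<in> V" and "\<And>v. v \<in> V - {w} \<Longrightarrow> t1 v \<le> t v"
    and "(\<Sum>v\<in>V. t1 v) = (\<Sum>v\<in>V. t v)"
    and "(\<Sum>v\<in>V. t1 v - t' v) < (\<Sum>v\<in>V. t v - t' v)"
proof -
  obtain u where u: "u \<in> V" "t' u < t u"
    using exists_greater_if_sum_eq[OF assms] by blast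
  obtain w where w: "w \<in> V" "t w < t' w"
    using exists_greater_if_sum_eq[OF assms(1) sum_eq[symmetric]] assms(3) by force
  have "u \<noteq> w" using u w by auto
  define t1 where "t1 = t(u := t u - 1, w := t w + 1)"
  have agree: "t1 v = t v" if "v \<in> V - {u} - {w}" for v
    using that by (simp add: t1_def)
  have split: "(\<Sum>v\<in>V. f v) = f u + f w + (\<Sum>v\<in>V - {u} - {w}. f v)" for f :: "'a \<Rightarrow> nat"
    using \<open>finite V\<close> u w \<open>u \<noteq> w\<close> by (simp add: sum.remove[of V u] sum.remove[of "V - {u}" w])
  have le: "t1 v \<le> t v" if "v \<in> V - {w}" for v
    using that by (simp add: t1_def)
  have sum_t1: "(\<Sum>v\<in>V. t1 v) = (\<Sum>v\<in>V. t v)"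
    using u \<open>u \<noteq> w\<close> by (simp add: split[of t1] split[of t] sum.cong[OF refl agree]) (simp add: t1_def)
  have smaller: "(\<Sum>v\<in>V. t1 v - t' v) < (\<Sum>v\<in>V. t v - t' v)"
    using u w \<open>u \<noteq> w\<close>
    by (intro sum_strict_mono_ex1[OF \<open>finite V\<close>]) (auto simp: t1_def)
  show thesis by (rule that[OF w(1) le sum_t1 smaller])
qed

lemma dyn_intermediate_value:
  fixes t t' :: "'a \<Rightarrow> nat"
  assumes "finite V" and "(\<Sum>v\<in>V. t v) = (\<Sum>v\<in>V. t' v)"
    and "dyn V E t \<le> r" and "r \<le> dyn V E t'"
  shows "\<exists>t''. (\<Sum>v\<in>V. t'' v) = (\<Sum>v\<in>V. t v) \<and> dyn V E t'' = r"
  using assms(2-)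
proof (induction "\<Sum>v\<in>V. t v - t' v" arbitrary: t rule: less_induct)
  case less
  show ?case
  proof (cases "dyn V E t = r")
    case True
    then show ?thesis by blast
  next
    case False
    then have "dyn V E t < r" using less.prems(2) by simp
    have "\<exists>v\<in>V. t v \<noteq> t' v"
    proof (rule ccontr)
      assume "\<not> (\<exists>v\<in>V. t v \<noteq> t' v)"
      then have "dyn V E t = dyn V E t'" by (intro dyn_cong[OF assms(1)]) blast
      then show False using \<open>dyn V E t < r\<close> less.prems(3) by simp
    qed
    then obtain w t1 where "w \<in> V" and le: "\<And>v. v \<in> V - {w} \<Longrightarrow> t1 v \<le> t v"
      and sum_t1: "(\<Sum>v\<in>V. t1 v) = (\<Sum>v\<in>V. t v)"
      and smaller: "(\<Sum>v\<in>V. t1 v - t' v) < (\<Sum>v\<in>V. t v - t' v)"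
      by (rule unit_transfer[OF assms(1) less.prems(1)]) blast
    have "dyn V E t1 \<le> dyn V E t + 1"
      by (rule dyn_le_Suc_if_le_off_vertex[OF assms(1) \<open>w \<in> V\<close> le])
    with \<open>dyn V E t < r\<close> have "dyn V E t1 \<le> r" by simp
    moreover have "(\<Sum>v\<in>V. t1 v) = (\<Sum>v\<in>V. t' v)" using sum_t1 less.prems(1) by simp
    ultimately obtain t'' where "(\<Sum>v\<in>V. t'' v) = (\<Sum>v\<in>V. t1 v)" and "dyn V E t'' = r"
      using less.hyps[OF smaller] less.prems(3) by blast
    then show ?thesis using sum_t1 by auto
  qed
qed

lemma avg_threshold_eq_iff_sum_eq:
  assumes "finite V"
  shows "avg_threshold V t = avg_threshold V t' \<longleftrightarrow> (\<Sum>v\<in>V. t v) = (\<Sum>v\<in>V. t' v)"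
proof (cases "V = {}")
  case False
  then have "real (card V) \<noteq> 0" using assms by simp
  then show ?thesis unfolding avg_threshold_def by (simp add: divide_cancel_right del: of_nat_sum)
qed (simp add: avg_threshold_def)

theorem proposition1:
  fixes V :: "'a set" and E :: "'a \<Rightarrow> 'a \<Rightarrow> bool"
    and \<tau> \<tau>' :: "'a \<Rightarrow> nat" and r :: int
  assumes "simple_graph V E"
    and "avg_threshold V \<tau> = avg_threshold V \<tau>'"
    and "int (dyn V E \<tau>) \<le> r" and "r \<le> int (dyn V E \<tau>')"
  shows "\<exists>\<tau>'' :: 'a \<Rightarrow> nat. avg_threshold V \<tau>'' = avg_threshold V \<tau> \<and> int (dyn V E \<tau>'') = r"
proof -
  have "finite V" using assms(1) unfolding simple_graph_def by blast
  have "0 \<le> r" using assms(3) by linarith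
  then obtain n where n: "r = int n" using nonneg_int_cases by blast
  have "(\<Sum>v\<in>V. \<tau> v) = (\<Sum>v\<in>V. \<tau>' v)"
    using assms(2) by (simp add: avg_threshold_eq_iff_sum_eq[OF \<open>finite V\<close>])
  moreover have "dyn V E \<tau> \<le> n" and "n \<le> dyn V E \<tau>'" using assms(3,4) n by simp_all
  ultimately obtain \<tau>'' where "(\<Sum>v\<in>V. \<tau>'' v) = (\<Sum>v\<in>V. \<tau> v)" and "dyn V E \<tau>'' = n"
    using dyn_intermediate_value[OF \<open>finite V\<close>] by blast
  then show ?thesis
    using n by (auto simp: avg_threshold_eq_iff_sum_eq[OF \<open>finite V\<close>])
qed

end
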